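(* Let $\alpha\neq0$ and consider the control system on $G$ $\dot x=u\alpha x,\quad \dot y=x-1,\quad u\in\mathcal U.$ If $(x_1,y_1),(x_2,y_2)\in G$ satisfy $x_1<1<x_2$, then $(x_2,y_2)\in\mathcal O^+(x_1,y_1)$ and $(x_1,y_1)\in\mathcal O^+(x_2,y_2)$.
   Context: Let $G=\{(x,y)\in\mathbb{R}^2:x>0\}$. Fix $\Omega=[u_*,u^*]$ with $u_*<0<u^*$. The admissible controls $\mathcal U$ are the piecewise constant functions $\mathbb{R}\to\Omega$. We write $\varphi(t,p,u)$ for the solution starting at $p$, and $\mathcal O^+(p)=\{\varphi(t,p,u):t\ge0,u\in\mathcal U\}$. *)

theory Defs
  imports "HOL-Analysis.Analysis"
begin

definition G :: "(real \<times> real) set" where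
  "G = {(x, y). x > 0}"

definition piecewise_constant :: "(real \<Rightarrow> real) \<Rightarrow> bool" where
  "piecewise_constant u \<longleftrightarrow>
     (\<forall>a b. \<exists>S. finite S \<and>
        (\<forall>s t. a \<le> s \<and> s \<le> t \<and> t \<le> b \<and> {s..t} \<inter> S = {} \<longrightarrow> u s = u t))"

definition admissible :: "real set \<Rightarrow> (real \<Rightarrow> real) \<Rightarrow> bool" where
  "admissible \<Omega> u \<longleftrightarrow> piecewise_constant u \<and> range u \<subseteq> \<Omega>"

definition is_solution ::
  "((real \<times> real) \<Rightarrow> real \<Rightarrow> (real \<times> real)) \<Rightarrow> (real \<Rightarrow> real) \<Rightarrow> real \<Rightarrow> (real \<Rightarrow> real \<times> real) \<Rightarrow> bool" where
  "is_solution F u T \<gamma> \<longleftrightarrow>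
     continuous_on {0..T} \<gamma> \<and> \<gamma> ` {0..T} \<subseteq> G \<and>
     (\<exists>S. finite S \<and>
        (\<forall>t\<in>{0..T} - S. (\<gamma> has_vector_derivative F (\<gamma> t) (u t)) (at t within {0..T})))"

definition pos_orbit ::
  "real set \<Rightarrow> ((real \<times> real) \<Rightarrow> real \<Rightarrow> (real \<times> real)) \<Rightarrow> real \<times> real \<Rightarrow> (real \<times> real) set" where
  "pos_orbit \<Omega> F p =
     {\<gamma> T | \<gamma> T u. T \<ge> 0 \<and> admissible \<Omega> u \<and> is_solution F u T \<gamma> \<and> \<gamma> 0 = p}"

definition sysF :: "real \<Rightarrow> (real \<times> real) \<Rightarrow> real \<Rightarrow> (real \<times> real)" where
  "sysF \<alpha> p u = (u * \<alpha> * fst p, fst p - 1)"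

end

theory Submission
  imports Defs
begin

text \<open>With \<open>u = 0\<close> the \<open>x\<close>-coordinate is frozen and \<open>y\<close> drifts with constant speed \<open>x - 1\<close>,
  so on opposite sides of the line \<open>x = 1\<close> it drifts in opposite directions. Since \<open>0\<close> lies
  strictly inside \<open>\<Omega>\<close>, a constant control of suitable sign moves \<open>x\<close> exponentially from
  \<open>x\<^sub>1\<close> to \<open>x\<^sub>2\<close> (or back). Hence: wait at the starting point, switch the control on until
  \<open>x\<close> reaches its target value, and wait again; the two waiting times are chosen nonnegative
  so that the opposite drifts compensate exactly for the \<open>y\<close>-displacement.\<close>

lemma nonneg_combination_opposite_signs:
  fixes p q R :: real
  assumes "p * q < 0"
  obtains a b where "a \<ge> 0" "b \<ge> 0" "p * a + q * b = R"
proof -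
  define a where "a = max 0 (R / p)"
  define b where "b = max 0 (R / q)"
  have "p \<noteq> 0" "q \<noteq> 0" using assms by auto
  moreover have "(p < 0 \<and> q > 0) \<or> (p > 0 \<and> q < 0)"
    using assms by (auto simp: mult_less_0_iff)
  ultimately have "p * a + q * b = R"
    unfolding a_def b_def
    by (cases "R \<ge> 0") (auto simp: max_def field_simps divide_le_0_iff zero_le_divide_iff)
  then show thesis using that[of a b] unfolding a_def b_def by auto
qed

definition switch_control :: "real \<Rightarrow> real \<Rightarrow> real \<Rightarrow> real \<Rightarrow> real" where
  "switch_control a \<tau> c t = (if a < t \<and> t < a + \<tau> then c else 0)"

lemma admissible_switch_control:
  assumes "c \<in> \<Omega>" "0 \<in> \<Omega>"
  shows "admissible \<Omega> (switch_control a \<tau> c)"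
  unfolding admissible_def piecewise_constant_def
proof (intro conjI allI)
  fix p q :: real
  show "\<exists>S. finite S \<and> (\<forall>s t. p \<le> s \<and> s \<le> t \<and> t \<le> q \<and> {s..t} \<inter> S = {}
          \<longrightarrow> switch_control a \<tau> c s = switch_control a \<tau> c t)"
  proof (intro exI[of _ "{a, a + \<tau>}"] conjI allI impI)
    fix s t assume h: "p \<le> s \<and> s \<le> t \<and> t \<le> q \<and> {s..t} \<inter> {a, a + \<tau>} = {}"
    then have "\<not> (s \<le> a \<and> a \<le> t)" "\<not> (s \<le> a + \<tau> \<and> a + \<tau> \<le> t)" by auto
    with h show "switch_control a \<tau> c s = switch_control a \<tau> c t"
      unfolding switch_control_def by auto
  qed simp
next
  show "range (switch_control a \<tau> c) \<subseteq> \<Omega>"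
    using assms unfolding switch_control_def by auto
qed

text \<open>The trajectory of \<open>switch_control a \<tau> c\<close> from \<open>(x\<^sub>a, y\<^sub>a)\<close>, where \<open>k = c \<alpha>\<close>;
  \<open>s\<close> is the time spent so far with the control switched on.\<close>
definition switch_path :: "real \<Rightarrow> real \<Rightarrow> real \<Rightarrow> real \<Rightarrow> real \<Rightarrow> real \<Rightarrow> real \<times> real" where
  "switch_path xa ya k a \<tau> t =
     (let s = max 0 (min (t - a) \<tau>)
      in (xa * exp (k * s),
          ya + (xa - 1) * min t a + (xa * (exp (k * s) - 1) / k - s)
             + (xa * exp (k * \<tau>) - 1) * max 0 (t - a - \<tau>)))"

lemma switch_path_start:
  assumes "a \<ge> 0" "\<tau> \<ge> 0"
  shows "switch_path xa ya k a \<tau> 0 = (xa, ya)"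
  using assms unfolding switch_path_def by (simp add: Let_def)

lemma switch_path_end:
  assumes "b \<ge> 0" "\<tau> \<ge> 0"
  shows "switch_path xa ya k a \<tau> (a + \<tau> + b) =
    (xa * exp (k * \<tau>),
     ya + (xa - 1) * a + (xa * (exp (k * \<tau>) - 1) / k - \<tau>) + (xa * exp (k * \<tau>) - 1) * b)"
  using assms unfolding switch_path_def by (simp add: Let_def)

lemma has_vector_derivative_real_pair:
  assumes "(f has_real_derivative f') (at t)" "(g has_real_derivative g') (at t)"
  shows "((\<lambda>t. (f t, g t)) has_vector_derivative (f', g')) (at t)"
  using assms
  by (intro has_vector_derivative_Pair) (simp_all add: has_real_derivative_iff_has_vector_derivative)

lemma switch_path_derivative:
  assumes k: "k = c * \<alpha>" "k \<noteq> 0" and "\<tau> > 0" and t: "t \<noteq> a" "t \<noteq> a + \<tau>"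
  shows "(switch_path xa ya k a \<tau> has_vector_derivative
            sysF \<alpha> (switch_path xa ya k a \<tau> t) (switch_control a \<tau> c t)) (at t)"
proof -
  let ?\<gamma> = "switch_path xa ya k a \<tau>"
  consider "t < a" | "a < t" "t < a + \<tau>" | "a + \<tau> < t" using t by linarith
  then show ?thesis
  proof cases
    case 1
    let ?g = "\<lambda>y. (xa, ya + (xa - 1) * y)"
    have eq: "?g y = ?\<gamma> y" if "y \<in> {..<a}" for y
      using that \<open>\<tau> > 0\<close> unfolding switch_path_def by (simp add: Let_def)
    have "(?g has_vector_derivative (0, xa - 1)) (at t)"
      by (intro has_vector_derivative_real_pair derivative_eq_intros) auto
    with 1 have "(?\<gamma> has_vector_derivative (0, xa - 1)) (at t)"
      using has_vector_derivative_transform_within_open[OF _ open_lessThan _ eq] by auto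
    moreover have "sysF \<alpha> (?\<gamma> t) (switch_control a \<tau> c t) = (0, xa - 1)"
      using 1 eq[of t, symmetric] unfolding sysF_def switch_control_def by simp
    ultimately show ?thesis by simp
  next
    case 2
    define e where "e y = exp (k * (y - a))" for y
    let ?g = "\<lambda>y. (xa * e y, ya + (xa - 1) * a + (xa * (e y - 1) / k - (y - a)))"
    have eq: "?g y = ?\<gamma> y" if "y \<in> {a<..<a + \<tau>}" for y
      using that unfolding switch_path_def e_def by (simp add: Let_def)
    have de: "(e has_real_derivative k * e t) (at t)"
      unfolding e_def by (auto intro!: derivative_eq_intros)
    have "((\<lambda>y. ya + (xa - 1) * a + (xa * (e y - 1) / k - (y - a)))
            has_real_derivative xa * (k * e t) / k - 1) (at t)"
      by (auto intro!: derivative_eq_intros de)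
    then have "(?g has_vector_derivative (xa * (k * e t), xa * e t - 1)) (at t)"
      using \<open>k \<noteq> 0\<close> by (intro has_vector_derivative_real_pair) (auto intro!: derivative_eq_intros de)
    with 2 have "(?\<gamma> has_vector_derivative (xa * (k * e t), xa * e t - 1)) (at t)"
      using has_vector_derivative_transform_within_open[OF _ open_greaterThanLessThan _ eq] by auto
    moreover have "sysF \<alpha> (?\<gamma> t) (switch_control a \<tau> c t) = (xa * (k * e t), xa * e t - 1)"
      using 2 eq[of t, symmetric] k unfolding sysF_def switch_control_def by (simp add: algebra_simps)
    ultimately show ?thesis by simp
  next
    case 3
    define xb where "xb = xa * exp (k * \<tau>)"
    let ?g = "\<lambda>y. (xb, ya + (xa - 1) * a + (xb / k - xa / k - \<tau>) + (xb - 1) * (y - a - \<tau>))"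
    have eq: "?g y = ?\<gamma> y" if "y \<in> {a + \<tau><..}" for y
      using that \<open>\<tau> > 0\<close> unfolding switch_path_def xb_def by (simp add: Let_def right_diff_distrib diff_divide_distrib)
    have "(?g has_vector_derivative (0, xb - 1)) (at t)"
      by (intro has_vector_derivative_real_pair derivative_eq_intros) auto
    with 3 have "(?\<gamma> has_vector_derivative (0, xb - 1)) (at t)"
      using has_vector_derivative_transform_within_open[OF _ open_greaterThan _ eq] by auto
    moreover have "sysF \<alpha> (?\<gamma> t) (switch_control a \<tau> c t) = (0, xb - 1)"
      using 3 eq[of t, symmetric] unfolding sysF_def switch_control_def by simp
    ultimately show ?thesis by simp
  qed
qed

lemma switch_path_is_solution:
  assumes "k = c * \<alpha>" "k \<noteq> 0" "\<tau> > 0" "xa > 0"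
  shows "is_solution (sysF \<alpha>) (switch_control a \<tau> c) T (switch_path xa ya k a \<tau>)"
  unfolding is_solution_def
proof (intro conjI exI[of _ "{a, a + \<tau>}"] ballI)
  show "continuous_on {0..T} (switch_path xa ya k a \<tau>)"
    unfolding switch_path_def Let_def by (intro continuous_intros) (auto simp: \<open>k \<noteq> 0\<close>)
  show "switch_path xa ya k a \<tau> ` {0..T} \<subseteq> G"
    using \<open>xa > 0\<close> unfolding G_def switch_path_def by (auto simp: Let_def)
  fix t assume "t \<in> {0..T} - {a, a + \<tau>}"
  then show "(switch_path xa ya k a \<tau> has_vector_derivative
      sysF \<alpha> (switch_path xa ya k a \<tau> t) (switch_control a \<tau> c t)) (at t within {0..T})"
    using assms by (auto intro!: has_vector_derivative_at_within[OF switch_path_derivative])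
qed simp

lemma reachable_across_line:
  assumes "xa > 0" "c \<in> \<Omega>" "0 \<in> \<Omega>" "\<tau> > 0"
    and transfer: "xa * exp (c * \<alpha> * \<tau>) = xb"
    and opposite: "(xa - 1) * (xb - 1) < 0"
  shows "(xb, yb) \<in> pos_orbit \<Omega> (sysF \<alpha>) (xa, ya)"
proof -
  define k where "k = c * \<alpha>"
  have "k \<noteq> 0" using transfer opposite unfolding k_def by auto
  define D where "D = xa * (exp (k * \<tau>) - 1) / k - \<tau>"
  obtain a b where ab: "a \<ge> 0" "b \<ge> 0" "(xa - 1) * a + (xb - 1) * b = yb - ya - D"
    using nonneg_combination_opposite_signs[OF opposite] by blast
  let ?\<gamma> = "switch_path xa ya k a \<tau>"
  have "?\<gamma> (a + \<tau> + b) = (xb, yb)"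
    using switch_path_end[OF \<open>b \<ge> 0\<close>, of \<tau> xa ya k a] ab transfer \<open>\<tau> > 0\<close>
    unfolding k_def D_def by (simp add: algebra_simps)
  moreover have "is_solution (sysF \<alpha>) (switch_control a \<tau> c) (a + \<tau> + b) ?\<gamma>"
    using assms \<open>k \<noteq> 0\<close> by (intro switch_path_is_solution) (auto simp: k_def)
  moreover have "admissible \<Omega> (switch_control a \<tau> c)"
    using assms by (intro admissible_switch_control)
  moreover have "?\<gamma> 0 = (xa, ya)" using switch_path_start ab \<open>\<tau> > 0\<close> by simp
  moreover have "a + \<tau> + b \<ge> 0" using ab \<open>\<tau> > 0\<close> by simp
  ultimately show ?thesis unfolding pos_orbit_def by (metis (mono_tags, lifting) mem_Collect_eq)
qed

lemma exponential_transfer: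
  fixes u_lo u_hi :: real
  assumes "u_lo < 0" "0 < u_hi" "\<alpha> \<noteq> 0" "xa > 0" "xb > 0" "xa \<noteq> xb"
  obtains c \<tau> where "c \<in> {u_lo..u_hi}" "\<tau> > 0" "xa * exp (c * \<alpha> * \<tau>) = xb"
proof -
  define L where "L = ln (xb / xa)"
  have "L \<noteq> 0" using assms unfolding L_def by (simp add: field_simps)
  obtain c where c: "c \<in> {u_lo..u_hi}" "L / (c * \<alpha>) > 0"
  proof (cases "(L > 0) = (\<alpha> > 0)")
    case True
    then have "L / (u_hi * \<alpha>) > 0" using assms \<open>L \<noteq> 0\<close>
      by (cases "L > 0") (auto simp: zero_less_divide_iff zero_less_mult_iff mult_less_0_iff)
    then show thesis using that[of u_hi] assms by auto
  next
    case False
    then have "L / (u_lo * \<alpha>) > 0" using assms \<open>L \<noteq> 0\<close>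
      by (cases "L > 0") (auto simp: zero_less_divide_iff zero_less_mult_iff mult_less_0_iff)
    then show thesis using that[of u_lo] assms by auto
  qed
  moreover have "xa * exp (c * \<alpha> * (L / (c * \<alpha>))) = xb"
    using c(2) assms unfolding L_def by auto
  ultimately show thesis using that by blast
qed

theorem mainTheorem6:
  fixes \<alpha> u_lo u_hi x1 y1 x2 y2 :: real
  assumes "u_lo < 0" and "0 < u_hi" and "\<alpha> \<noteq> 0"
    and "(x1, y1) \<in> G" and "(x2, y2) \<in> G"
    and "x1 < 1" and "1 < x2"
  shows "(x2, y2) \<in> pos_orbit {u_lo..u_hi} (sysF \<alpha>) (x1, y1)
       \<and> (x1, y1) \<in> pos_orbit {u_lo..u_hi} (sysF \<alpha>) (x2, y2)"
proof -
  have pos: "x1 > 0" "x2 > 0" using assms(4,5) unfolding G_def by auto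
  have zero: "0 \<in> {u_lo..u_hi}" using assms(1,2) by auto
  have opposite: "(x1 - 1) * (x2 - 1) < 0" "(x2 - 1) * (x1 - 1) < 0"
    using assms(6,7) by (simp_all add: mult_neg_pos mult_pos_neg)
  have reach: "(xb, yb) \<in> pos_orbit {u_lo..u_hi} (sysF \<alpha>) (xa, ya)"
    if endpoints: "xa > 0" "xb > 0" "(xa - 1) * (xb - 1) < 0" for xa ya xb yb
  proof -
    have "xa \<noteq> xb" using endpoints(3) by auto
    then obtain c \<tau> where "c \<in> {u_lo..u_hi}" "\<tau> > 0" "xa * exp (c * \<alpha> * \<tau>) = xb"
      using exponential_transfer[OF assms(1-3) endpoints(1,2)] by blast
    then show ?thesis using reachable_across_line endpoints zero by blast
  qed
  show ?thesis using reach pos opposite by blast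
qed

end
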